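(* Let $A\subseteq\mathbb Z$ and $Q$ be non-empty finite sets, $Q$ a set of primes, let $n=\prod_{q\in Q}q$ and $d$ a positive integer. Let $m:\mathbb Z_{>0}\to\mathbb R_{>0}$ be a multiplicative function with $m(q)\le q-1$ for all $q\in Q$, and let $\sigma:\mathbb N\to\mathbb R$. Let $(A_r)_{r\in\mathcal D(n)}$ be a family of subsets of $A$ such that (independence) $A_{rs}=A_r\cap A_s$ for all coprime $r,s\in\mathcal D(n)$, and $A_1=A$; (density) $|A_r|=|A|\cdot\frac{m(r)}{r}+\sigma(r)$ for all $r\in\mathcal D(n)$. Assume $|\sigma(r)|\le m(r)$ for every $r\in\mathcal D(n)$ and $m(q)\le d$ for every $q\in Q$. Then $$\tfrac12|A|\,W_m(Q)-B(Q,d)\;\le\;\Big|A\setminus\bigcup_{q\in Q}A_q\Big|\;\le\;\tfrac32|A|\,W_m(Q)+B(Q,d),$$ where $W_m(Q)=\prod_{q\in Q}\big(1-\frac{m(q)}{q}\big)$ and $B(Q,d)=(d\cdot|Q|)^{4(d+1)^2(2+\ln\ln(|Q|+1))+2}$.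
   Context: $\mathcal D(n)$ is the set of positive divisors of $n$. A function $m:\mathbb Z_{>0}\to\mathbb R_{>0}$ is multiplicative if $m(ab)=m(a)m(b)$ for all coprime positive integers $a,b$ (so $m(1)=1$). *)

theory Defs
  imports "HOL-Analysis.Analysis" "HOL-Computational_Algebra.Primes"
begin

definition multiplicative_pos :: "(nat \<Rightarrow> real) \<Rightarrow> bool" where
  "multiplicative_pos m \<longleftrightarrow> m 1 = 1 \<and> (\<forall>a>0. m a > 0) \<and>
     (\<forall>a b. a > 0 \<longrightarrow> b > 0 \<longrightarrow> coprime a b \<longrightarrow> m (a * b) = m a * m b)"

definition divisors_set :: "nat \<Rightarrow> nat set" where
  "divisors_set n = {r. 0 < r \<and> r dvd n}"

definition W_m :: "(nat \<Rightarrow> real) \<Rightarrow> nat set \<Rightarrow> real" where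
  "W_m m Q = (\<Prod>q\<in>Q. 1 - m q / real q)"

definition B_bound :: "nat set \<Rightarrow> nat \<Rightarrow> real" where
  "B_bound Q d = (real d * real (card Q)) powr
      (4 * (real d + 1)^2 * (2 + ln (ln (real (card Q) + 1))) + 2)"

end

theory Submission
  imports Defs
begin

text \<open>Brun's pure sieve. Put \<open>P a = {q \<in> Q. a \<in> A_q}\<close>; independence and density give
  \<open>#{a. T \<subseteq> P a} = |A| \<Prod>q\<in>T. m(q)/q + \<sigma>(\<Prod>T)\<close> for \<open>T \<subseteq> Q\<close>. Sum these with the weights
  \<open>(-1)^|T|\<close> of inclusion-exclusion, keeping only the \<open>T\<close> with at most \<open>K\<close> primes \<open>q > 3d\<close>. For each \<open>a\<close>
  the truncated sum over \<open>T \<subseteq> P a\<close> differs from \<open>[P a = {}]\<close> by \<open>(-1)^K\<close> times a partial alternating sum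
  of binomial coefficients, which has a fixed sign; so even and odd \<open>K\<close> give upper and lower bounds.
  The truncated main term lies within a factor \<open>1 \<plusminus> 1/2\<close> of \<open>|A| W_m(Q)\<close> as soon as \<open>K\<close> exceeds a
  multiple of \<open>\<Sum>q>3d. d/q\<close>, which is \<open>O(d log log |Q|)\<close> by a Chebyshev-type estimate; the error term
  involves only sets of at most \<open>K + 3d\<close> primes and is at most \<open>(d |Q|)^(K + 3d + 1)\<close>.\<close>

section \<open>Sums of reciprocals of primes\<close>

lemma prod_primes_dvd:
  fixes P :: "nat set"
  assumes "finite P" "\<And>p. p \<in> P \<Longrightarrow> prime p" "\<And>p. p \<in> P \<Longrightarrow> p dvd N"
  shows "\<Prod>P dvd N"
  using assms
proof (induction P rule: finite_induct)
  case (insert p F)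
  have "coprime p (\<Prod>F)"
    using insert by (intro prod_coprime_right primes_coprime) auto
  with insert show ?case by (simp add: divides_mult)
qed simp

text \<open>Every prime in \<open>(m, 2m]\<close> divides \<open>2m choose m \<le> 4^m\<close>.\<close>
lemma card_primes_dyadic_le:
  "j * card {p::nat. prime p \<and> 2^j < p \<and> p \<le> 2^(j+1)} \<le> 2^(j+1)"
proof -
  define m :: nat where "m = 2^j"
  define P where "P = {p. prime p \<and> m < p \<and> p \<le> 2*m}"
  have "p dvd (2*m choose m)" if "p \<in> P" for p
  proof -
    have p: "prime p" "m < p" "p \<le> 2*m" using that by (auto simp: P_def)
    have "fact m * fact m * (2*m choose m) = (fact (2*m) :: nat)"
      using binomial_fact_lemma[of m "2*m"] by simp
    moreover have "p dvd fact (2*m)" "\<not> p dvd fact m"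
      using p by (simp_all add: prime_dvd_fact_iff)
    ultimately show ?thesis using p(1) by (metis dvd_mult prime_dvd_mult_iff)
  qed
  then have "\<Prod>P dvd (2*m choose m)"
    by (intro prod_primes_dvd) (auto simp: P_def)
  then have "\<Prod>P \<le> 2*m choose m"
    by (rule dvd_imp_le) simp
  also have "\<dots> \<le> 2^(2*m)"
    by (rule binomial_le_pow2)
  finally have "\<Prod>P \<le> 2^(2*m)" .
  moreover have "m ^ card P \<le> \<Prod>P"
    using prod_mono[of P "\<lambda>_. m" id] by (auto simp: P_def)
  ultimately have "2^(j * card P) \<le> (2::nat)^(2*m)"
    by (simp add: m_def power_mult)
  then show ?thesis by (simp add: P_def m_def)
qed

lemma sum_inverse_primes_dyadic_le:
  assumes "j \<ge> 1"
  shows "(\<Sum>p\<in>{p::nat. prime p \<and> 2^j < p \<and> p \<le> 2^(j+1)}. 1 / real p) \<le> 2 / real j"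
proof -
  define P where "P = {p::nat. prime p \<and> 2^j < p \<and> p \<le> 2^(j+1)}"
  have "(\<Sum>p\<in>P. 1 / real p) \<le> real (card P) / 2^j"
    using sum_bounded_above[of P "\<lambda>p. 1 / real p" "1 / 2^j"]
    by (auto simp: P_def frac_le of_nat_less_iff[symmetric] less_imp_le)
  also have "\<dots> \<le> 2 / real j"
    using of_nat_mono[OF card_primes_dyadic_le[of j], where 'a=real] assms
    by (simp add: P_def field_simps)
  finally show ?thesis unfolding P_def .
qed

lemma sum_inverse_primes_le_pow2:
  assumes "J \<ge> 1"
  shows "(\<Sum>p\<in>{p::nat. prime p \<and> p \<le> 2^J}. 1 / real p) \<le> 1/2 + 2 * harm (J - 1)"
  using assms
proof (induction J rule: dec_induct)
  case base
  have "prime p \<and> p \<le> 2 \<longleftrightarrow> p = 2" for p :: nat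
    using prime_ge_2_nat[of p] by auto
  then have "{p::nat. prime p \<and> p \<le> 2} = {2}"
    by auto
  then show ?case by (simp add: harm_def)
next
  case (step J)
  have split: "{p::nat. prime p \<and> p \<le> 2^Suc J}
      = {p. prime p \<and> p \<le> 2^J} \<union> {p. prime p \<and> 2^J < p \<and> p \<le> 2^(J+1)}"
    by auto
  have "(\<Sum>p\<in>{p::nat. prime p \<and> p \<le> 2^Suc J}. 1 / real p)
      = (\<Sum>p\<in>{p::nat. prime p \<and> p \<le> 2^J}. 1 / real p)
        + (\<Sum>p\<in>{p::nat. prime p \<and> 2^J < p \<and> p \<le> 2^(J+1)}. 1 / real p)"
    unfolding split by (rule sum.union_disjoint) auto
  also have "\<dots> \<le> 1/2 + 2 * harm (J - 1) + 2 / real J"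
    using step sum_inverse_primes_dyadic_le[of J] by simp
  also have "\<dots> = 1/2 + 2 * harm (Suc J - 1)"
    using step by (cases J) (simp_all add: harm_Suc field_simps)
  finally show ?case .
qed

lemma harm_le_one_plus_ln:
  assumes "n \<ge> 1"
  shows "harm n \<le> 1 + ln (real n)"
  using assms
proof (induction n rule: dec_induct)
  case (step n)
  have "ln (real n / real (Suc n)) \<le> real n / real (Suc n) - 1"
    using step by (intro ln_le_minus_one) simp
  then have "1 / real (Suc n) \<le> ln (real (Suc n)) - ln (real n)"
    using step by (simp add: ln_div field_simps)
  then show ?case
    using step by (simp add: harm_Suc inverse_eq_divide)
qed (simp add: harm_def)

lemma ln_2_ge_two_thirds: "ln (2::real) \<ge> 2/3"
proof -
  have "exp (2/3::real) ^ 3 = exp 1 ^ 2"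
    by (simp flip: exp_of_nat_mult)
  also have "\<dots> \<le> (272/100)^2"
    using e_less_272 by (intro power_mono) auto
  also have "\<dots> \<le> 2^3"
    by (simp add: power2_eq_square)
  finally have "exp (2/3::real) \<le> 2"
    by (subst (asm) power_mono_iff) auto
  then show ?thesis
    by (subst ln_ge_iff) auto
qed

lemma ln_ln_nonneg:
  assumes "x \<ge> (3::real)"
  shows "ln (ln x) \<ge> 0"
proof -
  have "exp 1 \<le> x" using exp_le assms by linarith
  then have "1 \<le> ln x" using assms by (simp add: ln_ge_iff)
  then show ?thesis by simp
qed

text \<open>With \<open>2^J\<close> the least power of two \<open>\<ge> card Q\<close>, the primes of \<open>Q\<close> up to \<open>2^J\<close> are bounded
  by all primes up to \<open>2^J\<close>, and the others contribute at most \<open>card Q / 2^J \<le> 1\<close>.\<close>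
lemma sum_inverse_primes_le:
  assumes "finite Q" "\<forall>q\<in>Q. prime q" "card Q \<ge> 2"
  shows "(\<Sum>q\<in>Q. 1 / real q) \<le> 2 * ln (ln (real (card Q) + 1)) + 9/2"
proof -
  define k where "k = card Q"
  define J where "J = (LEAST J. k \<le> 2^J)"
  define l where "l = ln (ln (real k + 1))"
  have kJ: "k \<le> 2^J"
    unfolding J_def by (rule LeastI[of _ k]) (simp add: less_imp_le)
  have J1: "J \<ge> 1"
    using kJ assms(3) by (cases J) (auto simp: k_def)
  have Jk: "2^(J-1) < k"
    using J1 Least_le[of "\<lambda>J. k \<le> 2^J" "J - 1"] by (force simp: J_def[symmetric])
  have l0: "l \<ge> 0"
    unfolding l_def k_def using assms(3) by (intro ln_ln_nonneg) simp
  have small: "(\<Sum>q\<in>Q \<inter> {..2^J}. 1 / real q) \<le> 1/2 + 2 * harm (J - 1)"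
    using sum_mono2[of "{p::nat. prime p \<and> p \<le> 2^J}" "Q \<inter> {..2^J}" "\<lambda>q. 1 / real q"]
      sum_inverse_primes_le_pow2[OF J1] assms(2) by force
  have large: "(\<Sum>q\<in>Q - {..2^J}. 1 / real q) \<le> 1"
  proof -
    have "(\<Sum>q\<in>Q - {..2^J}. 1 / real q) \<le> real (card (Q - {..2^J})) * (1 / 2^J)"
      by (intro sum_bounded_above) (auto simp: frac_le of_nat_less_iff[symmetric] less_imp_le)
    also have "\<dots> \<le> real k * (1 / 2^J)"
      unfolding k_def using assms(1) by (intro mult_right_mono) (auto intro: card_mono)
    also have "\<dots> \<le> 1"
      using of_nat_mono[OF kJ, where 'a=real] by simp
    finally show ?thesis .
  qed
  have harm: "harm (J - 1) \<le> 3/2 + l"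
  proof (cases "J = 1")
    case False
    then have J2: "J - 1 \<ge> 1" using J1 by simp
    have "real (J - 1) * (2/3) \<le> real (J - 1) * ln 2"
      using ln_2_ge_two_thirds by (intro mult_left_mono) auto
    also have "\<dots> = ln (2 ^ (J - 1))"
      by (simp add: ln_realpow)
    also have "\<dots> < ln (real k)"
      using Jk by simp
    finally have "ln (real (J - 1)) \<le> ln (3/2 * ln (real k))"
      using False J1 by (intro ln_mono) auto
    also have "\<dots> = ln (3/2) + ln (ln (real k))"
      using assms(3) by (subst ln_mult) (auto simp: k_def)
    also have "\<dots> \<le> 1/2 + l"
    proof -
      have "ln (ln (real k)) \<le> l"
        using assms(3) by (simp add: l_def k_def)
      then show ?thesis
        using ln_le_minus_one[of "3/2"] by simp
    qed
    finally show ?thesis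
      using harm_le_one_plus_ln[OF J2] by simp
  qed (use l0 in \<open>simp add: harm_def\<close>)
  have "(\<Sum>q\<in>Q. 1 / real q) = (\<Sum>q\<in>Q \<inter> {..2^J}. 1 / real q) + (\<Sum>q\<in>Q - {..2^J}. 1 / real q)"
    using assms(1) by (metis sum.Int_Diff)
  then show ?thesis
    using small large harm by (simp add: l_def k_def)
qed

section \<open>Brun's pure sieve\<close>

lemma sum_Pow_insert:
  assumes "finite A" "x \<notin> A"
  shows "(\<Sum>X\<in>Pow (insert x A). f X) = (\<Sum>X\<in>Pow A. f X + f (insert x X))"
proof -
  have "inj_on (insert x) (Pow A)"
    using assms(2) by (intro inj_onI) (metis Diff_insert_absorb PowD subsetD)
  then have "(\<Sum>X\<in>insert x ` Pow A. f X) = (\<Sum>X\<in>Pow A. f (insert x X))"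
    by (simp add: sum.reindex)
  moreover have "(\<Sum>X\<in>Pow (insert x A). f X) = (\<Sum>X\<in>Pow A. f X) + (\<Sum>X\<in>insert x ` Pow A. f X)"
    unfolding Pow_insert using assms by (intro sum.union_disjoint) auto
  ultimately show ?thesis
    by (simp add: sum.distrib)
qed

lemma sum_Pow_card:
  fixes f :: "nat \<Rightarrow> 'b::comm_semiring_1"
  assumes "finite U"
  shows "(\<Sum>T\<in>Pow U. f (card T)) = (\<Sum>i\<le>card U. of_nat (card U choose i) * f i)"
proof -
  have "(\<Sum>T\<in>Pow U. f (card T)) = (\<Sum>i\<le>card U. \<Sum>T\<in>{T \<in> Pow U. card T = i}. f (card T))"
    using assms by (intro sum.group[symmetric]) (auto intro: card_mono)
  also have "\<dots> = (\<Sum>i\<le>card U. of_nat (card U choose i) * f i)"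
  proof (rule sum.cong[OF refl])
    fix i
    have "{T \<in> Pow U. card T = i} = {T. T \<subseteq> U \<and> card T = i}" by auto
    then show "(\<Sum>T\<in>{T \<in> Pow U. card T = i}. f (card T)) = of_nat (card U choose i) * f i"
      using n_subsets[OF assms, of i] by simp
  qed
  finally show ?thesis .
qed

lemma alternating_sum_choose_partial:
  "(\<Sum>i\<le>K. (-1)^i * real (Suc j choose i)) = (-1)^K * real (j choose K)"
proof (induction K)
  case (Suc K)
  then show ?case
    by (simp add: binomial_Suc_Suc algebra_simps)
qed simp

text \<open>Inclusion-exclusion truncated at level \<open>K\<close> in the elements of \<open>Q2\<close> only; the elements
  outside \<open>Q2\<close> (the few small primes) are sieved exactly.\<close>
definition brun_weight :: "'a set \<Rightarrow> nat \<Rightarrow> 'a set \<Rightarrow> real" where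
  "brun_weight Q2 K T = (if card (T \<inter> Q2) \<le> K then (-1) ^ card T else 0)"

lemma sum_brun_weight:
  assumes "finite U"
  shows "(\<Sum>T\<in>Pow U. brun_weight Q2 K T)
    = (if U = {} then 1 else if U \<subseteq> Q2 then (-1)^K * real (card U - 1 choose K) else 0)"
proof (cases "U \<subseteq> Q2")
  case True
  have "(\<Sum>T\<in>Pow U. brun_weight Q2 K T) = (\<Sum>T\<in>Pow U. if card T \<le> K then (-1) ^ card T else 0)"
    using True by (intro sum.cong) (auto simp: brun_weight_def Int_absorb2)
  also have "\<dots> = (\<Sum>i\<le>card U. real (card U choose i) * (if i \<le> K then (-1) ^ i else 0))"
    by (rule sum_Pow_card[OF assms])
  also have "\<dots> = (\<Sum>i\<le>K. (-1) ^ i * real (card U choose i))"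
    by (rule sum.mono_neutral_cong) (auto simp: binomial_eq_0)
  also have "\<dots> = (if U = {} then 1 else (-1)^K * real (card U - 1 choose K))"
    using assms by (cases "card U") (auto simp: alternating_sum_choose_partial sum.atMost_shift)
  finally show ?thesis
    using True by simp
next
  case False
  then obtain x where x: "x \<in> U" "x \<notin> Q2" by auto
  have "brun_weight Q2 K (insert x T) = - brun_weight Q2 K T" if "T \<in> Pow (U - {x})" for T
  proof -
    have "finite T" "x \<notin> T" using that assms finite_subset by auto
    moreover have "insert x T \<inter> Q2 = T \<inter> Q2" using x by auto
    ultimately show ?thesis by (simp add: brun_weight_def)
  qed
  then have "(\<Sum>T\<in>Pow U. brun_weight Q2 K T) = 0"
    using sum_Pow_insert[of "U - {x}" x "brun_weight Q2 K"] assms x by (simp add: insert_absorb)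
  then show ?thesis using False by auto
qed

lemma sum_Pow_supersets_swap:
  fixes w :: "'a set \<Rightarrow> real" and c :: "'i \<Rightarrow> real"
  assumes "finite I" "finite Q" "\<And>i. i \<in> I \<Longrightarrow> P i \<subseteq> Q"
  shows "(\<Sum>T\<in>Pow Q. w T * (\<Sum>i\<in>I. if T \<subseteq> P i then c i else 0))
       = (\<Sum>i\<in>I. c i * (\<Sum>T\<in>Pow (P i). w T))"
proof -
  have "(\<Sum>T\<in>Pow Q. w T * (\<Sum>i\<in>I. if T \<subseteq> P i then c i else 0))
      = (\<Sum>i\<in>I. \<Sum>T\<in>Pow Q. if T \<subseteq> P i then c i * w T else 0)"
    by (subst sum.swap) (auto simp: sum_distrib_left intro!: sum.cong)
  also have "\<dots> = (\<Sum>i\<in>I. \<Sum>T\<in>Pow (P i). c i * w T)"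
  proof (rule sum.cong[OF refl])
    fix i assume "i \<in> I"
    have "(\<Sum>T\<in>Pow Q. if T \<subseteq> P i then c i * w T else 0) = (\<Sum>T\<in>{T \<in> Pow Q. T \<subseteq> P i}. c i * w T)"
      using assms(2) by (intro sum.inter_filter[symmetric]) simp
    also have "{T \<in> Pow Q. T \<subseteq> P i} = Pow (P i)"
      using assms(3) \<open>i \<in> I\<close> by auto
    finally show "(\<Sum>T\<in>Pow Q. if T \<subseteq> P i then c i * w T else 0) = (\<Sum>T\<in>Pow (P i). c i * w T)" .
  qed
  finally show ?thesis
    by (simp add: sum_distrib_left)
qed

text \<open>The probability that, among independent events of probabilities \<open>g q\<close> (\<open>q \<in> Q\<close>),
  exactly those indexed by \<open>U\<close> occur.\<close>
definition exact_weight :: "'a set \<Rightarrow> ('a \<Rightarrow> real) \<Rightarrow> 'a set \<Rightarrow> real" where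
  "exact_weight Q g U = (\<Prod>q\<in>U. g q) * (\<Prod>q\<in>Q - U. 1 - g q)"

lemma prod_eq_sum_exact_weight:
  assumes "finite Q" "T \<subseteq> Q"
  shows "(\<Prod>q\<in>T. g q) = (\<Sum>U\<in>Pow Q. if T \<subseteq> U then exact_weight Q g U else 0)"
proof -
  define f where "f q = (if q \<in> T then 0 else 1 - g q)" for q
  have "(\<Prod>q\<in>T. g q) = (\<Prod>q\<in>Q. if q \<in> T then g q else 1)"
    using assms prod.inter_restrict[of Q g T] by (simp add: Int_absorb1)
  also have "\<dots> = (\<Prod>q\<in>Q. g q + f q)"
    by (intro prod.cong) (auto simp: f_def)
  also have "\<dots> = (\<Sum>U\<in>Pow Q. (\<Prod>q\<in>U. g q) * (\<Prod>q\<in>Q - U. f q))"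
    by (rule prod_add[OF assms(1)])
  also have "\<dots> = (\<Sum>U\<in>Pow Q. if T \<subseteq> U then exact_weight Q g U else 0)"
  proof (rule sum.cong[OF refl])
    fix U assume "U \<in> Pow Q"
    show "(\<Prod>q\<in>U. g q) * (\<Prod>q\<in>Q - U. f q) = (if T \<subseteq> U then exact_weight Q g U else 0)"
    proof (cases "T \<subseteq> U")
      case False
      then obtain x where "x \<in> Q - U" "f x = 0" using assms by (force simp: f_def)
      then have "(\<Prod>q\<in>Q - U. f q) = 0" using assms(1) by (intro prod_zero) auto
      then show ?thesis using False by simp
    qed (auto simp: exact_weight_def f_def intro!: prod.cong)
  qed
  finally show ?thesis .
qed

lemma exact_weight_eq:
  assumes "finite Q" "U \<subseteq> Q" "\<forall>q\<in>U. g q \<noteq> 1"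
  shows "exact_weight Q g U = (\<Prod>q\<in>Q. 1 - g q) * (\<Prod>q\<in>U. g q / (1 - g q))"
proof -
  have "(\<Prod>q\<in>Q. 1 - g q) = (\<Prod>q\<in>Q - U. 1 - g q) * (\<Prod>q\<in>U. 1 - g q)"
    using assms by (intro prod.subset_diff)
  moreover have "(\<Prod>q\<in>U. g q) = (\<Prod>q\<in>U. g q / (1 - g q)) * (\<Prod>q\<in>U. 1 - g q)"
    using assms(3) by (simp flip: prod.distrib)
  ultimately show ?thesis
    by (simp add: exact_weight_def)
qed

lemma choose_mult_four_pow_le: "real (j choose K) * 4 ^ Suc K \<le> 5 ^ Suc j"
proof -
  have "real (j choose K) * 4 ^ K \<le> (\<Sum>i\<le>j. real (j choose i) * 4 ^ i * 1 ^ (j - i))"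
    by (cases "K \<le> j") (auto intro!: member_le_sum sum_nonneg simp: binomial_eq_0)
  also have "\<dots> = 5 ^ j"
    using binomial_ring[of "4::real" 1 j] by simp
  finally have "4 * (real (j choose K) * 4 ^ K) \<le> 5 * 5 ^ j"
    using zero_le_power[of "5::real" j] by linarith
  then show ?thesis
    by (simp add: mult_ac)
qed

lemma brun_main_term_remainder:
  assumes "finite Q"
  shows "(\<Sum>T\<in>Pow Q. brun_weight Q2 K T * (\<Prod>q\<in>T. g q)) - (\<Prod>q\<in>Q. 1 - g q)
       = (\<Sum>U\<in>Pow Q. if U \<noteq> {} \<and> U \<subseteq> Q2
            then exact_weight Q g U * ((-1)^K * real (card U - 1 choose K)) else 0)"
proof -
  have "(\<Sum>T\<in>Pow Q. brun_weight Q2 K T * (\<Prod>q\<in>T. g q))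
      = (\<Sum>T\<in>Pow Q. brun_weight Q2 K T * (\<Sum>U\<in>Pow Q. if T \<subseteq> id U then exact_weight Q g U else 0))"
    using prod_eq_sum_exact_weight[OF assms] by (intro sum.cong) auto
  also have "\<dots> = (\<Sum>U\<in>Pow Q. exact_weight Q g U * (\<Sum>T\<in>Pow (id U). brun_weight Q2 K T))"
    using assms by (intro sum_Pow_supersets_swap) auto
  also have "\<dots> = (\<Sum>U\<in>Pow Q. (if U = {} then exact_weight Q g U else 0)
      + (if U \<noteq> {} \<and> U \<subseteq> Q2 then exact_weight Q g U * ((-1)^K * real (card U - 1 choose K)) else 0))"
    using assms by (intro sum.cong) (auto simp: sum_brun_weight finite_subset)
  finally show ?thesis
    using assms by (simp add: sum.distrib exact_weight_def)
qed

lemma exact_weight_choose_le: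
  assumes "finite Q" "U \<subseteq> Q" "U \<noteq> {}" "\<forall>q\<in>Q. 0 \<le> g q \<and> g q < 1"
  shows "exact_weight Q g U * real (card U - 1 choose K)
       \<le> (\<Prod>q\<in>Q. 1 - g q) * (\<Prod>q\<in>U. 5 * (g q / (1 - g q))) / 4 ^ Suc K"
proof -
  have "0 \<le> g q / (1 - g q)" if "q \<in> Q" for q
    using assms(4) that by (simp add: divide_nonneg_pos)
  then have odds: "0 \<le> (\<Prod>q\<in>U. g q / (1 - g q))" "0 \<le> (\<Prod>q\<in>Q. 1 - g q)"
    using assms by (auto intro!: prod_nonneg)
  have "real (card U - 1 choose K) * 4 ^ Suc K \<le> 5 ^ card U"
    using choose_mult_four_pow_le[of "card U - 1" K] assms finite_subset[OF assms(2,1)]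
    by (simp add: Suc_diff_1 card_gt_0_iff)
  then have "real (card U - 1 choose K) \<le> 5 ^ card U / 4 ^ Suc K"
    by (simp add: field_simps)
  moreover have ew: "exact_weight Q g U = (\<Prod>q\<in>Q. 1 - g q) * (\<Prod>q\<in>U. g q / (1 - g q))"
    using assms(1,2,4) by (intro exact_weight_eq) (auto, fastforce)
  moreover have "exact_weight Q g U \<ge> 0"
    unfolding ew using odds by simp
  ultimately have "exact_weight Q g U * real (card U - 1 choose K)
      \<le> (\<Prod>q\<in>Q. 1 - g q) * (\<Prod>q\<in>U. g q / (1 - g q)) * (5 ^ card U / 4 ^ Suc K)"
    by (metis mult_left_mono)
  also have "\<dots> = (\<Prod>q\<in>Q. 1 - g q) * (\<Prod>q\<in>U. 5 * (g q / (1 - g q))) / 4 ^ Suc K"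
    by (subst prod.distrib) (simp add: mult_ac)
  finally show ?thesis .
qed

text \<open>The truncation error is a sum over the exact events \<open>U \<subseteq> Q2\<close> weighted by
  \<open>card U - 1 choose K \<le> 5^card U / 4^Suc K\<close>; with \<open>h q = g q / (1 - g q)\<close> it is at most
  \<open>W (\<Prod>q\<in>Q2. 1 + 5 h q) / 4^Suc K \<le> W exp (5 \<Sum>q\<in>Q2. h q) / 4^Suc K\<close>.\<close>
lemma brun_main_term_bound:
  fixes g :: "'a \<Rightarrow> real"
  assumes "finite Q" "Q2 \<subseteq> Q" "\<forall>q\<in>Q. 0 \<le> g q \<and> g q < 1"
    and K: "5 * (\<Sum>q\<in>Q2. g q / (1 - g q)) + ln 2 \<le> real (Suc K) * ln 4"
  shows "\<bar>(\<Sum>T\<in>Pow Q. brun_weight Q2 K T * (\<Prod>q\<in>T. g q)) - (\<Prod>q\<in>Q. 1 - g q)\<bar>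
    \<le> (\<Prod>q\<in>Q. 1 - g q) / 2"
proof -
  define W where "W = (\<Prod>q\<in>Q. 1 - g q)"
  define h where "h q = 5 * (g q / (1 - g q))" for q
  have fQ2: "finite Q2" using assms finite_subset by blast
  have W0: "W \<ge> 0"
    using assms by (auto simp: W_def intro!: prod_nonneg)
  have ew0: "exact_weight Q g U \<ge> 0" if "U \<subseteq> Q" for U
    using assms(3) that unfolding exact_weight_def by (auto intro!: mult_nonneg_nonneg prod_nonneg)
  have h0: "\<forall>q\<in>Q2. h q \<ge> 0"
    using assms by (auto simp: h_def divide_nonneg_pos)
  have "\<bar>(\<Sum>T\<in>Pow Q. brun_weight Q2 K T * (\<Prod>q\<in>T. g q)) - W\<bar>
      \<le> (\<Sum>U\<in>Pow Q. if U \<noteq> {} \<and> U \<subseteq> Q2 then exact_weight Q g U * real (card U - 1 choose K) else 0)"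
    unfolding W_def brun_main_term_remainder[OF assms(1)]
    by (rule order_trans[OF sum_abs sum_mono]) (auto simp: abs_mult ew0)
  also have "\<dots> = (\<Sum>U\<in>Pow Q2. if U \<noteq> {} then exact_weight Q g U * real (card U - 1 choose K) else 0)"
    using assms(1,2) by (intro sum.mono_neutral_cong_right) auto
  also have "\<dots> \<le> (\<Sum>U\<in>Pow Q2. W / 4 ^ Suc K * ((\<Prod>q\<in>U. h q) * (\<Prod>q\<in>Q2 - U. 1)))"
    using assms exact_weight_choose_le[of Q _ g K] W0 h0
    by (intro sum_mono) (auto simp: W_def h_def intro!: divide_nonneg_pos prod_nonneg)
  also have "\<dots> = W / 4 ^ Suc K * (\<Prod>q\<in>Q2. h q + 1)"
    by (simp add: prod_add[OF fQ2] sum_distrib_left)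
  also have "\<dots> \<le> W / 4 ^ Suc K * exp (\<Sum>q\<in>Q2. h q)"
  proof -
    have "(\<Prod>q\<in>Q2. h q + 1) \<le> (\<Prod>q\<in>Q2. exp (h q))"
      using h0 by (intro prod_mono) (auto simp: add.commute[of _ 1] exp_ge_add_one_self)
    then show ?thesis
      unfolding exp_sum[OF fQ2] using W0 by (intro mult_left_mono) auto
  qed
  also have "\<dots> \<le> W / 2"
  proof -
    have "exp (\<Sum>q\<in>Q2. h q) \<le> exp (real (Suc K) * ln 4 - ln 2)"
      using K by (simp add: h_def sum_distrib_left)
    also have "\<dots> = 4 ^ Suc K / 2"
      by (simp add: exp_diff exp_of_nat_mult[of "Suc K"] del: of_nat_Suc)
    finally show ?thesis
      using W0 by (simp add: field_simps mult_left_mono)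
  qed
  finally show ?thesis
    unfolding W_def .
qed

text \<open>Each \<open>a\<close> contributes \<open>\<Sum>T \<subseteq> P a. brun_weight Q2 K T\<close> to the left-hand sum, which is
  \<open>1\<close> if \<open>P a = {}\<close> and otherwise \<open>0\<close> or of the sign of \<open>(-1)^K\<close>.\<close>
lemma brun_sieve_inequality:
  assumes "finite A" "finite Q" "\<forall>a\<in>A. P a \<subseteq> Q"
  shows "(-1)^K * ((\<Sum>T\<in>Pow Q. brun_weight Q2 K T * real (card {a\<in>A. T \<subseteq> P a}))
                   - real (card {a\<in>A. P a = {}})) \<ge> 0"
proof -
  have "(\<Sum>T\<in>Pow Q. brun_weight Q2 K T * real (card {a\<in>A. T \<subseteq> P a}))
      = (\<Sum>T\<in>Pow Q. brun_weight Q2 K T * (\<Sum>a\<in>A. if T \<subseteq> P a then 1 else 0))"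
    using assms(1) by (simp add: sum.inter_filter[symmetric])
  also have "\<dots> = (\<Sum>a\<in>A. \<Sum>T\<in>Pow (P a). brun_weight Q2 K T)"
    using assms by (subst sum_Pow_supersets_swap) auto
  finally have "(\<Sum>T\<in>Pow Q. brun_weight Q2 K T * real (card {a\<in>A. T \<subseteq> P a}))
      - real (card {a\<in>A. P a = {}})
      = (\<Sum>a\<in>A. (\<Sum>T\<in>Pow (P a). brun_weight Q2 K T) - (if P a = {} then 1 else 0))"
    using assms(1) by (simp add: sum_subtractf sum.inter_filter[symmetric])
  moreover have "(-1)^K * ((\<Sum>T\<in>Pow (P a). brun_weight Q2 K T) - (if P a = {} then 1 else 0)) \<ge> 0"
    if "a \<in> A" for a
    using that assms finite_subset[of "P a" Q]
    by (simp add: sum_brun_weight mult.assoc[symmetric] flip: power_add)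
  ultimately show ?thesis
    by (simp add: sum_distrib_left sum_nonneg)
qed

lemma brun_sieve:
  fixes A :: "'a set" and P :: "'a \<Rightarrow> 'b set" and g :: "'b \<Rightarrow> real" and e :: "'b set \<Rightarrow> real"
  assumes "finite A" "finite Q" "Q2 \<subseteq> Q" "\<forall>a\<in>A. P a \<subseteq> Q"
    and "\<forall>q\<in>Q. 0 \<le> g q \<and> g q < 1"
    and count: "\<forall>T. T \<subseteq> Q \<longrightarrow> real (card {a\<in>A. T \<subseteq> P a}) = real (card A) * (\<Prod>q\<in>T. g q) + e T"
    and "5 * (\<Sum>q\<in>Q2. g q / (1 - g q)) + ln 2 \<le> real (Suc K) * ln 4"
  defines "E \<equiv> \<bar>\<Sum>T\<in>Pow Q. brun_weight Q2 K T * e T\<bar>"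
  shows "even K \<Longrightarrow> real (card {a\<in>A. P a = {}}) \<le> 3/2 * real (card A) * (\<Prod>q\<in>Q. 1 - g q) + E"
    and "odd K \<Longrightarrow> 1/2 * real (card A) * (\<Prod>q\<in>Q. 1 - g q) - E \<le> real (card {a\<in>A. P a = {}})"
proof -
  define W where "W = (\<Prod>q\<in>Q. 1 - g q)"
  define M where "M = (\<Sum>T\<in>Pow Q. brun_weight Q2 K T * (\<Prod>q\<in>T. g q))"
  define S where "S = real (card {a\<in>A. P a = {}})"
  define SK where "SK = (\<Sum>T\<in>Pow Q. brun_weight Q2 K T * real (card {a\<in>A. T \<subseteq> P a}))"
  define ES where "ES = (\<Sum>T\<in>Pow Q. brun_weight Q2 K T * e T)"
  have "SK = real (card A) * M + ES"
    using count by (simp add: SK_def M_def ES_def algebra_simps sum.distrib sum_distrib_left)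
  moreover have "\<bar>M - W\<bar> \<le> W / 2"
    unfolding M_def W_def using assms by (intro brun_main_term_bound) auto
  then have "M \<le> 3/2 * W" "1/2 * W \<le> M"
    by linarith+
  then have "real (card A) * M \<le> real (card A) * (3/2 * W)"
    and "real (card A) * (1/2 * W) \<le> real (card A) * M"
    by (intro mult_left_mono; simp)+
  moreover have "(-1)^K * (SK - S) \<ge> 0"
    unfolding SK_def S_def using assms by (intro brun_sieve_inequality) auto
  then have "even K \<Longrightarrow> S \<le> SK" "odd K \<Longrightarrow> SK \<le> S"
    by simp_all
  moreover have "\<bar>ES\<bar> = E"
    by (simp add: E_def ES_def)
  ultimately show "even K \<Longrightarrow> S \<le> 3/2 * real (card A) * W + E"
    and "odd K \<Longrightarrow> 1/2 * real (card A) * W - E \<le> S"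
    by (auto simp: abs_le_iff)
qed

lemma sum_pow_le_pow_Suc:
  fixes D :: real
  assumes "D \<ge> 2"
  shows "(\<Sum>i=1..L. D ^ i) \<le> D ^ Suc L"
proof (induction L)
  case (Suc L)
  have "(\<Sum>i=1..Suc L. D ^ i) \<le> D ^ Suc L + D ^ Suc L"
    using Suc by simp
  also have "\<dots> \<le> D * D ^ Suc L"
    using assms by (simp add: mult_right_mono)
  finally show ?case by simp
qed (use assms in simp)

lemma sum_Pow_pow_card_le:
  fixes x :: real
  assumes "finite Q" "x \<ge> 0" "x * real (card Q) \<ge> 2"
  shows "(\<Sum>T\<in>Pow Q. if card T \<in> {1..L} then x ^ card T else 0) \<le> (x * real (card Q)) ^ Suc L"
proof -
  define k where "k = card Q"
  have "(\<Sum>T\<in>Pow Q. if card T \<in> {1..L} then x ^ card T else 0)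
      = (\<Sum>i\<le>k. real (k choose i) * (if i \<in> {1..L} then x ^ i else 0))"
    unfolding k_def by (rule sum_Pow_card[OF assms(1)])
  also have "\<dots> \<le> (\<Sum>i\<le>k. if i \<in> {1..L} then (x * real k) ^ i else 0)"
  proof (rule sum_mono)
    fix i assume "i \<in> {..k}"
    then have "real (k choose i) \<le> real k ^ i"
      by (metis binomial_le_pow of_nat_le_iff of_nat_power atMost_iff)
    then have "x ^ i * real (k choose i) \<le> x ^ i * real k ^ i"
      using assms(2) by (intro mult_left_mono) auto
    then show "real (k choose i) * (if i \<in> {1..L} then x ^ i else 0)
        \<le> (if i \<in> {1..L} then (x * real k) ^ i else 0)"
      by (simp add: power_mult_distrib mult.commute)
  qed
  also have "\<dots> = (\<Sum>i\<in>{..k} \<inter> {1..L}. (x * real k) ^ i)"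
    by (rule sum.inter_restrict[symmetric]) simp
  also have "\<dots> \<le> (\<Sum>i=1..L. (x * real k) ^ i)"
    using assms(2) by (intro sum_mono2) auto
  also have "\<dots> \<le> (x * real k) ^ Suc L"
    using assms(3) by (intro sum_pow_le_pow_Suc) (simp add: k_def)
  finally show ?thesis
    unfolding k_def .
qed

text \<open>Only subsets with at most \<open>K\<close> elements in \<open>Q2\<close> carry weight, so all the error terms
  that survive have at most \<open>K + card (Q - Q2)\<close> elements.\<close>
lemma brun_error_bound:
  fixes e :: "'a set \<Rightarrow> real" and x :: real
  assumes "finite Q" "x \<ge> 0" "x * real (card Q) \<ge> 2"
    and "e {} = 0" "\<forall>T\<subseteq>Q. \<bar>e T\<bar> \<le> x ^ card T"
  shows "\<bar>\<Sum>T\<in>Pow Q. brun_weight Q2 K T * e T\<bar> \<le> (x * real (card Q)) ^ (K + card (Q - Q2) + 1)"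
proof -
  have "\<bar>brun_weight Q2 K T * e T\<bar> \<le> (if card T \<in> {1..K + card (Q - Q2)} then x ^ card T else 0)"
    if "T \<subseteq> Q" for T
  proof (cases "T = {} \<or> K < card (T \<inter> Q2)")
    case False
    have "card T \<le> card (T \<inter> Q2) + card (T - Q2)"
      by (metis Int_Diff_Un card_Un_le)
    moreover have "card (T - Q2) \<le> card (Q - Q2)"
      using assms(1) that by (intro card_mono) auto
    moreover have "card T \<noteq> 0"
      using False finite_subset[OF that assms(1)] by auto
    ultimately show ?thesis
      using False that assms(5) by (auto simp: brun_weight_def abs_mult)
  qed (auto simp: brun_weight_def assms(2,4))
  then have "\<bar>\<Sum>T\<in>Pow Q. brun_weight Q2 K T * e T\<bar>
      \<le> (\<Sum>T\<in>Pow Q. if card T \<in> {1..K + card (Q - Q2)} then x ^ card T else 0)"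
    by (intro order_trans[OF sum_abs sum_mono]) auto
  also have "\<dots> \<le> (x * real (card Q)) ^ (K + card (Q - Q2) + 1)"
    using sum_Pow_pow_card_le[OF assms(1-3)] by simp
  finally show ?thesis .
qed

section \<open>Explicit choice of the truncation level\<close>

lemma odds_le:
  fixes a d q :: real
  assumes "0 \<le> a" "a \<le> d" "3 * d < q"
  shows "(a / q) / (1 - a / q) \<le> 3/2 * d / q"
proof -
  have "q > 0" "q - a \<ge> 2/3 * q"
    using assms by linarith+
  then have "a / (q - a) \<le> d / (2/3 * q)"
    using assms by (intro frac_le) auto
  with \<open>q > 0\<close> show ?thesis
    by (simp add: field_simps)
qed

lemma sum_odds_large_primes_le:
  fixes m :: "nat \<Rightarrow> real"
  assumes "finite Q" "\<forall>q\<in>Q. 0 \<le> m q \<and> m q \<le> real d"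
  defines "H \<equiv> \<Sum>q\<in>{q\<in>Q. 3 * d < q}. (m q / q) / (1 - m q / q)"
  shows "0 \<le> H" "H \<le> 3/2 * real d * (\<Sum>q\<in>Q. 1 / real q)"
proof -
  have bound: "(m q / q) / (1 - m q / q) \<le> 3/2 * real d * (1 / real q)"
    and nonneg: "0 \<le> (m q / q) / (1 - m q / q)" if "q \<in> Q" "3 * d < q" for q
  proof -
    have "3 * real d < real q" "m q \<le> real d" "0 \<le> m q"
      using that assms(2) by (auto simp flip: of_nat_less_iff)
    then show "(m q / q) / (1 - m q / q) \<le> 3/2 * real d * (1 / real q)"
      using odds_le[of "m q" "real d" "real q"] by simp
    show "0 \<le> (m q / q) / (1 - m q / q)"
      using \<open>m q \<le> real d\<close> \<open>0 \<le> m q\<close> \<open>3 * real d < real q\<close> by (simp add: divide_nonneg_pos)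
  qed
  show "0 \<le> H"
    unfolding H_def using nonneg by (intro sum_nonneg) auto
  have "H \<le> (\<Sum>q\<in>{q\<in>Q. 3 * d < q}. 3/2 * real d * (1 / real q))"
    unfolding H_def using bound by (intro sum_mono) auto
  also have "\<dots> \<le> (\<Sum>q\<in>Q. 3/2 * real d * (1 / real q))"
    using assms(1) by (intro sum_mono2) auto
  finally show "H \<le> 3/2 * real d * (\<Sum>q\<in>Q. 1 / real q)"
    by (simp add: sum_distrib_left)
qed

lemma brun_exponent_bound:
  fixes x l s H :: real and K0 k1 :: nat
  assumes "x \<ge> 1" "l \<ge> 0" "s \<le> 2 * l + 9/2" "H \<le> 3/2 * x * s" "real k1 \<le> 3 * x"
    and "real K0 \<le> 15/4 * H + 1"
  shows "real (K0 + k1 + 2) \<le> 4 * (x + 1)^2 * (2 + l) + 2"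
proof -
  have "x * s \<le> x * (2 * l + 9/2)"
    using assms by (intro mult_left_mono) auto
  then have "x * s \<le> 2 * (x * l) + 9/2 * x"
    by (simp add: algebra_simps)
  moreover have x2: "x * x \<ge> 2 * x - 1"
    using zero_le_square[of "x - 1"] by (simp add: algebra_simps)
  moreover have "x * x * l \<ge> (2 * x - 1) * l"
    using x2 assms(2) by (rule mult_right_mono)
  then have "x * x * l \<ge> 2 * (x * l) - l"
    by (simp add: algebra_simps)
  moreover have "x * l \<ge> 0" "H \<le> 3/2 * (x * s)"
    using assms by (simp_all add: mult.assoc)
  moreover have "4 * (x + 1)^2 * (2 + l) + 2 = 8 * (x * x) + 16 * x + 10 + 4 * (x * x * l) + 8 * (x * l) + 4 * l"
    by (simp add: power2_eq_square algebra_simps)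
  moreover have "real (K0 + k1 + 2) = real K0 + real k1 + 2"
    by simp
  ultimately show ?thesis
    using assms by linarith
qed

lemma ln_4_ge: "ln (4::real) \<ge> 4/3"
  using ln_2_ge_two_thirds ln_mult[of 2 2] by simp

lemma brun_level_exists:
  fixes m :: "nat \<Rightarrow> real"
  assumes "finite Q" "\<forall>q\<in>Q. prime q" "card Q \<ge> 2" "d > 0"
    and "\<forall>q\<in>Q. 0 \<le> m q \<and> m q \<le> real d"
  defines "Q2 \<equiv> {q\<in>Q. 3 * d < q}"
  obtains K0 where
    "\<And>K. K \<ge> K0 \<Longrightarrow> 5 * (\<Sum>q\<in>Q2. (m q / q) / (1 - m q / q)) + ln 2 \<le> real (Suc K) * ln 4"
    "real (K0 + card (Q - Q2) + 2) \<le> 4 * (real d + 1)^2 * (2 + ln (ln (real (card Q) + 1))) + 2"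
proof -
  define H where "H = (\<Sum>q\<in>Q2. (m q / q) / (1 - m q / q))"
  define K0 where "K0 = nat \<lceil>5 * H / ln 4\<rceil>"
  have H: "0 \<le> H" "H \<le> 3/2 * real d * (\<Sum>q\<in>Q. 1 / real q)"
    using sum_odds_large_primes_le[OF assms(1,5)] by (simp_all add: H_def Q2_def)
  have "0 \<le> 5 * H / ln 4"
    using H(1) ln_4_ge by simp
  then have K0: "5 * H / ln 4 \<le> real K0" "real K0 \<le> 5 * H / ln 4 + 1"
    using real_nat_ceiling_ge[of "5 * H / ln 4"] of_int_ceiling_le_add_one[of "5 * H / ln 4"]
    by (simp_all add: K0_def)
  show ?thesis
  proof
    fix K assume "K \<ge> K0"
    then have "5 * H \<le> real K * ln 4"
      using K0(1) ln_4_ge order_trans[OF _ mult_right_mono[of "real K0" "real K" "ln 4"]]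
      by (simp add: field_simps)
    moreover have "ln (2::real) \<le> ln 4"
      by simp
    moreover have "real (Suc K) * ln 4 = real K * ln 4 + ln 4"
      by (simp add: algebra_simps)
    ultimately have "5 * H + ln 2 \<le> real (Suc K) * ln 4"
      by linarith
    then show "5 * (\<Sum>q\<in>Q2. (m q / q) / (1 - m q / q)) + ln 2 \<le> real (Suc K) * ln 4"
      by (simp only: H_def)
  next
    have "Q - Q2 \<subseteq> {1..3 * d}"
      using assms(2) prime_gt_0_nat by (force simp: Q2_def Suc_le_eq)
    then have "real (card (Q - Q2)) \<le> 3 * real d"
      using card_mono[of "{1..3 * d}" "Q - Q2"] by simp
    moreover have "real K0 \<le> 15/4 * H + 1"
      using K0(2) H(1) ln_4_ge divide_left_mono[of "4/3" "ln 4" "5 * H"] by simp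
    moreover have "0 \<le> ln (ln (real (card Q) + 1))"
      using assms(3) by (intro ln_ln_nonneg) simp
    ultimately show "real (K0 + card (Q - Q2) + 2) \<le> 4 * (real d + 1)^2 * (2 + ln (ln (real (card Q) + 1))) + 2"
      using assms H sum_inverse_primes_le[OF assms(1-3)]
      by (intro brun_exponent_bound) auto
  qed
qed

lemma brun_sieve_explicit_large:
  fixes A :: "'a set" and P :: "'a \<Rightarrow> nat set" and m :: "nat \<Rightarrow> real" and e :: "nat set \<Rightarrow> real"
  assumes "finite A" "finite Q" "\<forall>q\<in>Q. prime q" "card Q \<ge> 2" "d > 0"
    and "\<forall>a\<in>A. P a \<subseteq> Q"
    and m: "\<forall>q\<in>Q. 0 \<le> m q \<and> m q < real q \<and> m q \<le> real d"
    and count: "\<forall>T. T \<subseteq> Q \<longrightarrow>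
      real (card {a\<in>A. T \<subseteq> P a}) = real (card A) * (\<Prod>q\<in>T. m q / real q) + e T"
    and "e {} = 0" "\<forall>T\<subseteq>Q. \<bar>e T\<bar> \<le> real d ^ card T"
  shows "1/2 * real (card A) * W_m m Q - B_bound Q d \<le> real (card {a\<in>A. P a = {}})"
    and "real (card {a\<in>A. P a = {}}) \<le> 3/2 * real (card A) * W_m m Q + B_bound Q d"
proof -
  define Q2 where "Q2 = {q\<in>Q. 3 * d < q}"
  define D where "D = real d * real (card Q)"
  define E where "E = 4 * (real d + 1)^2 * (2 + ln (ln (real (card Q) + 1))) + 2"
  obtain K0 where level: "\<And>K. K \<ge> K0 \<Longrightarrow>
      5 * (\<Sum>q\<in>Q2. (m q / q) / (1 - m q / q)) + ln 2 \<le> real (Suc K) * ln 4"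
    and expo: "real (K0 + card (Q - Q2) + 2) \<le> E"
    using brun_level_exists[OF assms(2-5), of m] m unfolding Q2_def E_def by auto
  have D2: "D \<ge> 2"
    using assms(4,5) mult_mono[of 1 "real d" 2 "real (card Q)"] by (simp add: D_def)
  have err: "\<bar>\<Sum>T\<in>Pow Q. brun_weight Q2 K T * e T\<bar> \<le> B_bound Q d" if "K \<le> Suc K0" for K
  proof -
    have "\<bar>\<Sum>T\<in>Pow Q. brun_weight Q2 K T * e T\<bar> \<le> D ^ (K + card (Q - Q2) + 1)"
      unfolding D_def using assms D2 by (intro brun_error_bound) (auto simp: D_def)
    also have "\<dots> \<le> D ^ (K0 + card (Q - Q2) + 2)"
      using D2 that by (intro power_increasing) auto
    also have "\<dots> = D powr real (K0 + card (Q - Q2) + 2)"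
      using D2 by (intro powr_realpow[symmetric]) simp
    also have "\<dots> \<le> D powr E"
      using D2 expo by (intro powr_mono) auto
    finally show ?thesis
      by (simp add: B_bound_def D_def E_def)
  qed
  have sieve: "\<forall>q\<in>Q. 0 \<le> m q / real q \<and> m q / real q < 1" "Q2 \<subseteq> Q"
    using m by (auto simp: Q2_def)
  note bounds = brun_sieve[OF assms(1,2) sieve(2) assms(6) sieve(1) count level]
  have "W_m m Q = (\<Prod>q\<in>Q. 1 - m q / real q)"
    by (simp add: W_m_def)
  then have "(even K \<longrightarrow> real (card {a\<in>A. P a = {}}) \<le> 3/2 * real (card A) * W_m m Q + B_bound Q d)
      \<and> (odd K \<longrightarrow> 1/2 * real (card A) * W_m m Q - B_bound Q d \<le> real (card {a\<in>A. P a = {}}))"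
    if "K0 \<le> K" "K \<le> Suc K0" for K
    using bounds[OF that(1)] err[OF that(2)] by auto
  from this[of K0] this[of "Suc K0"]
  show "1/2 * real (card A) * W_m m Q - B_bound Q d \<le> real (card {a\<in>A. P a = {}})"
    and "real (card {a\<in>A. P a = {}}) \<le> 3/2 * real (card A) * W_m m Q + B_bound Q d"
    by (cases "even K0"; simp)+
qed

lemma brun_sieve_singleton:
  assumes "finite A" "\<forall>a\<in>A. P a \<subseteq> {q}" "g \<le> 1"
    and "real (card {a\<in>A. q \<in> P a}) = real (card A) * g + e" "\<bar>e\<bar> \<le> B"
  shows "1/2 * real (card A) * (1 - g) - B \<le> real (card {a\<in>A. P a = {}})"
    and "real (card {a\<in>A. P a = {}}) \<le> 3/2 * real (card A) * (1 - g) + B"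
proof -
  have "{a\<in>A. P a = {}} = A - {a\<in>A. q \<in> P a}"
    using assms(2) by auto
  then have "real (card {a\<in>A. P a = {}}) = real (card A) * (1 - g) - e"
    using assms(1,4) by (simp add: card_Diff_subset of_nat_diff card_mono algebra_simps)
  moreover have "0 \<le> real (card A) * (1 - g)"
    using assms(3) by simp
  ultimately show "1/2 * real (card A) * (1 - g) - B \<le> real (card {a\<in>A. P a = {}})"
    and "real (card {a\<in>A. P a = {}}) \<le> 3/2 * real (card A) * (1 - g) + B"
    using assms(5) by auto
qed

lemma le_B_bound_singleton:
  assumes "d > 0"
  shows "real d \<le> B_bound {q} d"
proof -
  have "ln (inverse (ln 2)) \<le> inverse (ln (2::real)) - 1"
    using ln_2_ge_two_thirds by (intro ln_le_minus_one) simp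
  moreover have "inverse (ln (2::real)) \<le> 3/2"
    using ln_2_ge_two_thirds by (simp add: field_simps)
  ultimately have "0 \<le> 2 + ln (ln (2::real))"
    by (simp add: ln_inverse)
  then have "1 \<le> 4 * (real d + 1)^2 * (2 + ln (ln (real (card {q}) + 1))) + 2"
    by simp
  then show ?thesis
    using powr_mono[of 1 _ "real d"] assms by (simp add: B_bound_def)
qed

lemma brun_sieve_explicit:
  fixes A :: "'a set" and P :: "'a \<Rightarrow> nat set" and m :: "nat \<Rightarrow> real" and e :: "nat set \<Rightarrow> real"
  assumes "finite A" "finite Q" "\<forall>q\<in>Q. prime q" "Q \<noteq> {}" "d > 0"
    and "\<forall>a\<in>A. P a \<subseteq> Q"
    and "\<forall>q\<in>Q. 0 \<le> m q \<and> m q < real q \<and> m q \<le> real d"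
    and count: "\<forall>T. T \<subseteq> Q \<longrightarrow>
      real (card {a\<in>A. T \<subseteq> P a}) = real (card A) * (\<Prod>q\<in>T. m q / real q) + e T"
    and "\<forall>T\<subseteq>Q. \<bar>e T\<bar> \<le> real d ^ card T"
  shows "1/2 * real (card A) * W_m m Q - B_bound Q d \<le> real (card {a\<in>A. P a = {}})
       \<and> real (card {a\<in>A. P a = {}}) \<le> 3/2 * real (card A) * W_m m Q + B_bound Q d"
proof (cases "card Q = 1")
  case True
  then obtain q where Q: "Q = {q}"
    by (rule card_1_singletonE)
  have "\<bar>e {q}\<bar> \<le> B_bound Q d"
    using assms(5,7,9) le_B_bound_singleton[OF assms(5), of q] by (force simp: Q)
  then show ?thesis
    using brun_sieve_singleton[of A P q "m q / real q" "e {q}" "B_bound Q d"] assms count[rule_format, of "{q}"]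
    by (simp add: Q W_m_def)
next
  case False
  then have "card Q \<ge> 2"
    using assms(2,4) card_gt_0_iff[of Q] by linarith
  moreover have "e {} = 0"
    using count[rule_format, of "{}"] by simp
  ultimately show ?thesis
    using brun_sieve_explicit_large[OF assms(1-3) _ assms(5-8)] assms(9) by blast
qed

section \<open>Families of sets indexed by squarefree divisors\<close>

lemma multiplicative_pos_prod_primes:
  assumes "multiplicative_pos m" "finite T" "\<forall>q\<in>T. prime q"
  shows "m (\<Prod>T) = (\<Prod>q\<in>T. m q)"
  using assms(2,3)
proof (induction T rule: finite_induct)
  case (insert p T)
  have "coprime p (\<Prod>T)" "p > 0" "\<Prod>T > 0"
    using insert by (auto intro!: prod_coprime_right primes_coprime prod_pos prime_gt_0_nat)
  then show ?case
    using insert assms(1) by (simp add: multiplicative_pos_def)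
qed (use assms(1) in \<open>simp add: multiplicative_pos_def\<close>)

lemma multiplicative_pos_prod_primes_le:
  assumes "multiplicative_pos m" "finite T" "\<forall>q\<in>T. prime q \<and> m q \<le> c"
  shows "m (\<Prod>T) \<le> c ^ card T"
proof -
  have "\<forall>q\<in>T. 0 \<le> m q \<and> m q \<le> c"
    using assms(1,3) prime_gt_0_nat by (fastforce simp: multiplicative_pos_def less_imp_le)
  then show ?thesis
    using assms prod_mono[of T m "\<lambda>_. c"] by (simp add: multiplicative_pos_prod_primes)
qed

lemma prod_mem_divisors_set:
  assumes "finite Q" "\<forall>q\<in>Q. prime q" "T \<subseteq> Q"
  shows "\<Prod>T \<in> divisors_set (\<Prod>Q)"
proof -
  have "0 < \<Prod>T"
    using assms by (intro prod_pos) (auto dest: prime_gt_0_nat)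
  then show ?thesis
    using prod_dvd_prod_subset[OF assms(1,3), of id] by (simp add: divisors_set_def)
qed

lemma independent_sets_prod:
  fixes Ar :: "nat \<Rightarrow> 'a set"
  assumes "finite Q" "\<forall>q\<in>Q. prime q" "T \<subseteq> Q" "Ar 1 = A"
    and "\<forall>r\<in>divisors_set (\<Prod>Q). \<forall>s\<in>divisors_set (\<Prod>Q). coprime r s \<longrightarrow> Ar (r * s) = Ar r \<inter> Ar s"
  shows "Ar (\<Prod>T) = A \<inter> (\<Inter>q\<in>T. Ar q)"
  using finite_subset[OF assms(3,1)] assms(3)
proof (induction T rule: finite_induct)
  case (insert p T)
  have "coprime p (\<Prod>T)"
    using insert assms(2) by (intro prod_coprime_right primes_coprime) auto
  moreover have "p \<in> divisors_set (\<Prod>Q)" "\<Prod>T \<in> divisors_set (\<Prod>Q)"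
    using prod_mem_divisors_set[OF assms(1,2), of "{p}"] prod_mem_divisors_set[OF assms(1,2), of T] insert
    by auto
  ultimately show ?case
    using insert assms(5) by auto
qed (use assms(4) in simp)

lemma card_independent_sets_prod:
  fixes Ar :: "nat \<Rightarrow> 'a set" and m \<sigma> :: "nat \<Rightarrow> real"
  assumes "finite Q" "\<forall>q\<in>Q. prime q" "T \<subseteq> Q" "multiplicative_pos m" "Ar 1 = A"
    and "\<forall>r\<in>divisors_set (\<Prod>Q). \<forall>s\<in>divisors_set (\<Prod>Q). coprime r s \<longrightarrow> Ar (r * s) = Ar r \<inter> Ar s"
    and "\<forall>r\<in>divisors_set (\<Prod>Q). real (card (Ar r)) = real (card A) * (m r / real r) + \<sigma> r"
  shows "real (card (A \<inter> (\<Inter>q\<in>T. Ar q))) = real (card A) * (\<Prod>q\<in>T. m q / real q) + \<sigma> (\<Prod>T)"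
proof -
  have T: "finite T" "\<forall>q\<in>T. prime q"
    using assms(2,3) finite_subset[OF assms(3,1)] by auto
  have "real (card (Ar (\<Prod>T))) = real (card A) * (m (\<Prod>T) / real (\<Prod>T)) + \<sigma> (\<Prod>T)"
    using assms(7) prod_mem_divisors_set[OF assms(1-3)] by blast
  then show ?thesis
    using independent_sets_prod[where Ar=Ar and A=A, OF assms(1-3,5,6)]
      multiplicative_pos_prod_primes[OF assms(4) T]
    by (simp add: prod_dividef)
qed

theorem lemma3:
  fixes A :: "int set" and Q :: "nat set" and n d :: nat
    and m :: "nat \<Rightarrow> real" and \<sigma> :: "nat \<Rightarrow> real" and Ar :: "nat \<Rightarrow> int set"
  assumes "finite A" "A \<noteq> {}" "finite Q" "Q \<noteq> {}"
    and "\<forall>q\<in>Q. prime q"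
    and "n = (\<Prod>q\<in>Q. q)"
    and "d > 0"
    and "multiplicative_pos m"
    and "\<forall>q\<in>Q. m q \<le> real q - 1"
    and "\<forall>r\<in>divisors_set n. Ar r \<subseteq> A"
    and "\<forall>r\<in>divisors_set n. \<forall>s\<in>divisors_set n. coprime r s \<longrightarrow> Ar (r * s) = Ar r \<inter> Ar s"
    and "Ar 1 = A"
    and "\<forall>r\<in>divisors_set n. real (card (Ar r)) = real (card A) * (m r / real r) + \<sigma> r"
    and "\<forall>r\<in>divisors_set n. \<bar>\<sigma> r\<bar> \<le> m r"
    and "\<forall>q\<in>Q. m q \<le> real d"
  shows "(1/2) * real (card A) * W_m m Q - B_bound Q d \<le> real (card (A - (\<Union>q\<in>Q. Ar q)))
       \<and> real (card (A - (\<Union>q\<in>Q. Ar q))) \<le> (3/2) * real (card A) * W_m m Q + B_bound Q d"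
proof -
  note prQ = assms(5) and mult = assms(8)
  define P where "P a = {q\<in>Q. a \<in> Ar q}" for a
  have "\<forall>q\<in>Q. 0 \<le> m q \<and> m q < real q \<and> m q \<le> real d"
  proof
    fix q assume "q \<in> Q"
    then have "0 < m q" "m q \<le> real q - 1" "m q \<le> real d"
      using mult prQ prime_gt_0_nat assms(9,15) by (auto simp: multiplicative_pos_def)
    then show "0 \<le> m q \<and> m q < real q \<and> m q \<le> real d"
      by linarith
  qed
  moreover have "real (card {a\<in>A. T \<subseteq> P a}) = real (card A) * (\<Prod>q\<in>T. m q / real q) + \<sigma> (\<Prod>T)"
    if "T \<subseteq> Q" for T
  proof -
    have "{a\<in>A. T \<subseteq> P a} = A \<inter> (\<Inter>q\<in>T. Ar q)"
      using that by (auto simp: P_def)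
    then show ?thesis
      using card_independent_sets_prod[where Ar=Ar and A=A and \<sigma>=\<sigma>, OF assms(3,5) that mult assms(12)]
        assms(6,11,13)
      by simp
  qed
  moreover have "\<bar>\<sigma> (\<Prod>T)\<bar> \<le> real d ^ card T" if "T \<subseteq> Q" for T
  proof -
    have "\<bar>\<sigma> (\<Prod>T)\<bar> \<le> m (\<Prod>T)"
      using assms(6,14) prod_mem_divisors_set[OF assms(3) prQ that] by blast
    also have "\<dots> \<le> real d ^ card T"
      using mult finite_subset[OF that assms(3)] that prQ assms(15)
      by (intro multiplicative_pos_prod_primes_le) auto
    finally show ?thesis .
  qed
  moreover have "A - (\<Union>q\<in>Q. Ar q) = {a\<in>A. P a = {}}"
    by (auto simp: P_def)
  ultimately show ?thesis
    using brun_sieve_explicit[OF assms(1,3,5,4,7), of P m "\<lambda>T. \<sigma> (\<Prod>T)"]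
    by (auto simp: P_def)
qed

end
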